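(* Let $\mathcal L$ be a finite atomic lattice with atoms $A_1,\dots,A_n$ and $\mathcal G$ a building set in $\mathcal L$. The toric variety $X_{\Sigma(\mathcal L,\mathcal G)}$ associated with the fan $\Sigma(\mathcal L,\mathcal G)=\{V(\mathcal S):\mathcal S\text{ nested in }\mathcal G\}$ can be constructed as follows: start from $\mathbb C^n$, the toric variety of the cone spanned by the standard basis of $\mathbb Z^n$, stratified by torus orbits; perform successively the blowups along the torus orbit closures associated with the faces $V(\lfloor G\rfloor)$ of the standard cone, for $G\in\mathcal G$ taken in a linear order $\succ$ such that $G\le G'$ in $\mathcal L$ implies $G'\succeq G$ (i.e. larger elements first); finally remove from the resulting variety all open torus orbits corresponding to cones $V(\mathcal T)$ of the resulting fan whose index set $\mathcal T\subseteq\mathcal G$ is not nested.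
   Context: A lattice is a finite poset in which every subset has a join $\vee$ and a meet; $\hat0$ is its least element; atomic means every element is a join of atoms. For $X\le Y$ write $[X,Y]=\{Z:X\le Z\le Y\}$ and $\mathcal G_{\le X}=\{G\in\mathcal G:G\le X\}$. A subset $\mathcal G\subseteq\mathcal L\setminus\{\hat0\}$ is a building set if for every $X\ne\hat0$, with $\{G_1,\dots,G_k\}$ the maximal elements of $\mathcal G_{\le X}$, there is a poset isomorphism $\prod_{i=1}^k[\hat0,G_i]\to[\hat0,X]$ sending $(\hat0,\dots,G_i,\dots,\hat0)$ to $G_i$. A subset $\mathcal S\subseteq\mathcal G$ is nested if for every set of pairwise incomparable $G_1,\dots,G_t\in\mathcal S$, $t\ge2$, $G_1\vee\dots\vee G_t\notin\mathcal G$. For $X\in\mathcal L$, $\lfloor X\rfloor$ is the set of atoms below $X$, $v_X\in\mathbb R^n$ has $i$-th coordinate $1$ if $A_i\le X$ and $0$ otherwise, and $V(\mathcal S)$ is the cone spanned by $\{v_X:X\in\mathcal S\}$. The blowup along the orbit closure of $V(\lfloor G\rfloor)$ is the toric blowup corresponding to the barycentric stellar subdivision of the fan at that cone, introducing the ray spanned by $v_G$. *)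

theory Defs
  imports Complex_Main "HOL-Library.FuncSet"
begin

text \<open>Finite lattices: a finite type of class complete_lattice.
  Vectors in R^n are represented as functions 'a => real supported on the atoms
  (coordinate i corresponds to atom A_i).\<close>

definition is_atom :: "'a::{finite,complete_lattice} \<Rightarrow> bool" where
  "is_atom A \<longleftrightarrow> A \<noteq> bot \<and> (\<forall>x. x \<le> A \<longrightarrow> x = bot \<or> x = A)"

definition atomic_lattice :: "'a::{finite,complete_lattice} itself \<Rightarrow> bool" where
  "atomic_lattice _ \<longleftrightarrow> (\<forall>X::'a. X = Sup {A. is_atom A \<and> A \<le> X})"

definition maximal_below :: "'a::{finite,complete_lattice} set \<Rightarrow> 'a \<Rightarrow> 'a set" where
  "maximal_below \<G> X = {G \<in> \<G>. G \<le> X \<and> \<not> (\<exists>H\<in>\<G>. H \<le> X \<and> G < H)}"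

definition building_set :: "'a::{finite,complete_lattice} set \<Rightarrow> bool" where
  "building_set \<G> \<longleftrightarrow> \<G> \<subseteq> UNIV - {bot} \<and>
     (\<forall>X. X \<noteq> bot \<longrightarrow>
        (let M = maximal_below \<G> X in
         \<exists>\<phi>. bij_betw \<phi> (PiE M (\<lambda>G. {bot..G})) {bot..X} \<and>
             (\<forall>f\<in>PiE M (\<lambda>G. {bot..G}). \<forall>g\<in>PiE M (\<lambda>G. {bot..G}).
                 (\<forall>G\<in>M. f G \<le> g G) \<longleftrightarrow> \<phi> f \<le> \<phi> g) \<and>
             (\<forall>G\<in>M. \<phi> (\<lambda>H\<in>M. if H = G then G else bot) = G)))"

definition nested :: "'a::{finite,complete_lattice} set \<Rightarrow> 'a set \<Rightarrow> bool" where
  "nested \<G> S \<longleftrightarrow> S \<subseteq> \<G> \<and>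
     (\<forall>H \<subseteq> S. 2 \<le> card H \<longrightarrow> (\<forall>x\<in>H. \<forall>y\<in>H. x \<noteq> y \<longrightarrow> \<not> x \<le> y) \<longrightarrow> Sup H \<notin> \<G>)"

definition vvec :: "'a::{finite,complete_lattice} \<Rightarrow> 'a \<Rightarrow> real" where
  "vvec X = (\<lambda>A. if is_atom A \<and> A \<le> X then 1 else 0)"

definition cone_span :: "('a \<Rightarrow> real) set \<Rightarrow> ('a \<Rightarrow> real) set" where
  "cone_span R = {(\<lambda>i. \<Sum>x\<in>R. c x * x i) | c. \<forall>x\<in>R. 0 \<le> c x}"

definition V_cone :: "'a::{finite,complete_lattice} set \<Rightarrow> ('a \<Rightarrow> real) set" where
  "V_cone S = cone_span (vvec ` S)"

definition floor_atoms :: "'a::{finite,complete_lattice} \<Rightarrow> 'a set" where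
  "floor_atoms X = {A. is_atom A \<and> A \<le> X}"

definition nested_fan :: "'a::{finite,complete_lattice} set \<Rightarrow> ('a \<Rightarrow> real) set set" where
  "nested_fan \<G> = {V_cone S | S. nested \<G> S}"

text \<open>Simplicial fans are represented by the sets of ray generators of their cones.
  Barycentric stellar subdivision at the cone generated by sigma: new ray spanned by
  the sum of the generators of sigma; cones containing sigma are removed and the
  cones tau + ray are added for tau in the closed star of sigma not containing sigma.\<close>
definition stellar :: "('a \<Rightarrow> real) set set \<Rightarrow> ('a \<Rightarrow> real) set \<Rightarrow> ('a \<Rightarrow> real) set set" where
  "stellar F \<sigma> = {\<tau> \<in> F. \<not> \<sigma> \<subseteq> \<tau>} \<union>
     {insert (\<lambda>i. \<Sum>x\<in>\<sigma>. x i) \<tau> | \<tau>. \<tau> \<union> \<sigma> \<in> F \<and> \<not> \<sigma> \<subseteq> \<tau>}"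

definition standard_fan :: "'a::{finite,complete_lattice} itself \<Rightarrow> ('a \<Rightarrow> real) set set" where
  "standard_fan _ = Pow (vvec ` {A::'a. is_atom A})"

definition blown_up_fan :: "'a::{finite,complete_lattice} list \<Rightarrow> ('a \<Rightarrow> real) set set" where
  "blown_up_fan Gs = foldl (\<lambda>F G. stellar F (vvec ` floor_atoms G)) (standard_fan TYPE('a)) Gs"

definition pruned_fan :: "'a::{finite,complete_lattice} set \<Rightarrow> 'a list \<Rightarrow> ('a \<Rightarrow> real) set set" where
  "pruned_fan \<G> Gs = {R \<in> blown_up_fan Gs. nested \<G> {G \<in> \<G>. vvec G \<in> R}}"

end

theory Submission
  imports Defs
begin

text \<open>After the members of a set \<open>D \<subseteq> \<G>\<close> have been blown up, a nested set \<open>S\<close> is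
  represented by the cone spanned by the \<open>v\<^sub>G\<close> for \<open>G \<in> S \<inter> D\<close> together with the atoms
  below the members of \<open>S - D\<close>. Blowing up the next element \<open>G\<close> replaces \<open>\<lfloor>G\<rfloor>\<close> by \<open>v\<^sub>G\<close>
  in this cone when \<open>G \<in> S\<close> and leaves the cone alone otherwise; for this to be compatible
  with the stellar subdivision, \<open>\<lfloor>G\<rfloor>\<close> must not lie among the remaining generators. That
  holds because the atoms of \<open>G\<close> cannot be covered by members of \<open>S\<close> not above \<open>G\<close>: the
  maximal covering members would form an antichain in \<open>S\<close> whose join is also the join of it
  with \<open>G\<close>, which lies in \<open>\<G>\<close> by the building set property, contradicting nestedness.
  Conversely every cone of the blown-up fan is spanned by vectors \<open>v\<^sub>G\<close> with \<open>G \<in> \<G>\<close>, so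
  after pruning exactly the cones \<open>V(S)\<close> with \<open>S\<close> nested remain.\<close>

lemma atomic_lattice_Sup_floor_atoms:
  "atomic_lattice TYPE('a::{finite,complete_lattice}) \<Longrightarrow> (X::'a) = Sup (floor_atoms X)"
  unfolding atomic_lattice_def floor_atoms_def by blast

lemma floor_atoms_nonempty:
  assumes "atomic_lattice TYPE('a::{finite,complete_lattice})" and "(X::'a) \<noteq> bot"
  shows "floor_atoms X \<noteq> {}"
  using atomic_lattice_Sup_floor_atoms[OF assms(1), of X] assms(2) by auto

lemma inj_vvec:
  assumes "atomic_lattice TYPE('a::{finite,complete_lattice})"
  shows "inj (vvec :: 'a \<Rightarrow> 'a \<Rightarrow> real)"
proof (rule injI)
  fix X Y :: 'a
  assume "vvec X = vvec Y"
  then have "floor_atoms X = floor_atoms Y"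
    unfolding floor_atoms_def by (metis (mono_tags, lifting) vvec_def zero_neq_one)
  then show "X = Y"
    using atomic_lattice_Sup_floor_atoms[OF assms] by metis
qed

lemma vvec_atom: "is_atom a \<Longrightarrow> vvec a = (\<lambda>i. if i = a then 1 else 0)"
  unfolding vvec_def is_atom_def by (rule ext) auto

lemma sum_vvec_floor_atoms:
  assumes "atomic_lattice TYPE('a::{finite,complete_lattice})"
  shows "(\<lambda>i. \<Sum>x\<in>vvec ` floor_atoms (G::'a). x i) = vvec G"
proof
  fix i
  have "(\<Sum>x\<in>vvec ` floor_atoms G. x i) = (\<Sum>a\<in>floor_atoms G. vvec a i)"
    using inj_vvec[OF assms] by (simp add: sum.reindex inj_on_subset)
  also have "\<dots> = (\<Sum>a\<in>floor_atoms G. if i = a then 1 else 0)"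
    by (rule sum.cong) (auto simp: floor_atoms_def vvec_atom)
  also have "\<dots> = vvec G i"
    by (simp add: floor_atoms_def vvec_def)
  finally show "(\<Sum>x\<in>vvec ` floor_atoms G. x i) = vvec G i" .
qed

lemma nested_subset: "nested \<G> S \<Longrightarrow> S \<subseteq> \<G>"
  by (simp add: nested_def)

lemma building_set_bot_notin: "building_set \<G> \<Longrightarrow> bot \<notin> \<G>"
  by (auto simp: building_set_def)

lemma building_set_atom_mem:
  assumes "building_set \<G>" and "is_atom (a::'a::{finite,complete_lattice})"
  shows "a \<in> \<G>"
proof (rule ccontr)
  assume "a \<notin> \<G>"
  then have "maximal_below \<G> a = {}"
    using assms building_set_bot_notin unfolding maximal_below_def is_atom_def by fastforce
  moreover obtain \<phi> where "bij_betw \<phi> (PiE (maximal_below \<G> a) (\<lambda>G. {bot..G})) {bot..a}"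
    using assms unfolding building_set_def Let_def is_atom_def by blast
  ultimately have "{bot..a} = {\<phi> (\<lambda>x. undefined)}"
    by (simp add: bij_betw_def)
  moreover have "bot \<in> {bot..a}" "a \<in> {bot..a}" "a \<noteq> bot"
    using assms(2) by (auto simp: is_atom_def)
  ultimately show False by (metis singletonD)
qed

lemma ex_maximal_below_ge:
  assumes "Y \<in> \<G>" and "Y \<le> (X::'a::{finite,complete_lattice})"
  shows "\<exists>M\<in>maximal_below \<G> X. Y \<le> M"
proof -
  obtain M where "M \<in> {Z\<in>\<G>. Z \<le> X}" "Y \<le> M" "\<forall>Z\<in>{Z\<in>\<G>. Z \<le> X}. M \<le> Z \<longrightarrow> M = Z"
    using finite_has_maximal2[of "{Z\<in>\<G>. Z \<le> X}" Y] assms by auto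
  then show ?thesis
    unfolding maximal_below_def by (auto simp: less_le)
qed

text \<open>The unit vectors of two distinct factors of the product decomposition of \<open>[bot, X]\<close>
  have only the zero vector below both of them.\<close>

lemma building_set_maximal_below_disjoint:
  assumes bs: "building_set \<G>"
    and M1: "M1 \<in> maximal_below \<G> X" and M2: "M2 \<in> maximal_below \<G> X" and "M1 \<noteq> M2"
  shows "inf M1 M2 = (bot::'a::{finite,complete_lattice})"
proof -
  define M where "M = maximal_below \<G> X"
  define P where "P = PiE M (\<lambda>G. {bot..G})"
  define e where "e G = (\<lambda>H\<in>M. if H = G then G else bot)" for G
  have "X \<noteq> bot"
    using M1 building_set_bot_notin[OF bs] unfolding maximal_below_def by (auto simp: bot_unique)
  with bs obtain \<phi> where bij: "bij_betw \<phi> P {bot..X}"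
    and ord: "\<forall>f\<in>P. \<forall>g\<in>P. (\<forall>G\<in>M. f G \<le> g G) \<longleftrightarrow> \<phi> f \<le> \<phi> g"
    and unit: "\<forall>G\<in>M. \<phi> (e G) = G"
    unfolding building_set_def Let_def M_def P_def e_def by blast
  have eP: "e G \<in> P" if "G \<in> M" for G
    using that unfolding e_def P_def by auto
  have onto: "\<exists>f\<in>P. \<phi> f = Z" if "Z \<le> X" for Z
    using bij that unfolding bij_betw_def by force
  have "inf M1 M2 \<le> X"
    using M1 unfolding maximal_below_def by (auto intro: le_infI1)
  then obtain g where g: "g \<in> P" "\<phi> g = inf M1 M2"
    using onto by blast
  obtain f0 where f0: "f0 \<in> P" "\<phi> f0 = bot"
    using onto[OF bot_least] by blast
  have below_unit: "\<forall>H\<in>M. g H \<le> e G H" if "G \<in> M" "inf M1 M2 \<le> G" for G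
    using ord g eP[OF that(1)] unit that by simp
  have g_bot: "g G = bot" if "G \<in> M" for G
  proof -
    have "g G \<le> e M1 G" "g G \<le> e M2 G"
      using below_unit[of M1] below_unit[of M2] M1 M2 that by (simp_all add: M_def)
    moreover have "e M1 G = bot \<or> e M2 G = bot"
      using \<open>M1 \<noteq> M2\<close> that by (simp add: e_def)
    ultimately show ?thesis
      using bot_unique by metis
  qed
  have "\<forall>G\<in>M. g G \<le> f0 G"
    using g_bot by simp
  then have "\<phi> g \<le> \<phi> f0"
    using ord g(1) f0(1) by blast
  then show ?thesis
    unfolding g(2) f0(2) using bot_unique by blast
qed

lemma building_set_Sup_insert_mem:
  assumes bs: "building_set \<G>" and G: "G \<in> \<G>" and H: "H \<subseteq> \<G>"
    and meets: "\<forall>K\<in>H. \<exists>a. is_atom a \<and> a \<le> K \<and> a \<le> G"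
  shows "Sup (insert G H) \<in> (\<G>::'a::{finite,complete_lattice} set)"
proof -
  define X where "X = Sup (insert G H)"
  obtain MG where MG: "MG \<in> maximal_below \<G> X" "G \<le> MG"
    using ex_maximal_below_ge[OF G, of X] by (auto simp: X_def Sup_upper)
  have "K \<le> MG" if K: "K \<in> H" for K
  proof -
    have "K \<le> X"
      using K by (simp add: X_def le_supI2 Sup_upper)
    then obtain MK where MK: "MK \<in> maximal_below \<G> X" "K \<le> MK"
      using ex_maximal_below_ge[of K \<G> X] H K by auto
    obtain a where a: "is_atom a" "a \<le> K" "a \<le> G"
      using meets K by blast
    have "a \<le> inf MK MG"
      using a MK(2) MG(2) by (meson le_inf_iff order_trans)
    moreover have "a \<noteq> bot"
      using a(1) by (simp add: is_atom_def)
    ultimately have "MK = MG"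
      using building_set_maximal_below_disjoint[OF bs MK(1) MG(1)] bot_unique by metis
    then show ?thesis
      using MK(2) by simp
  qed
  then have "X \<le> MG"
    using MG(2) by (simp add: X_def Sup_le_iff)
  moreover have "MG \<le> X" "MG \<in> \<G>"
    using MG(1) by (auto simp: maximal_below_def)
  ultimately show ?thesis
    unfolding X_def[symmetric] using order_antisym by metis
qed

lemma nested_antichain_Sup_not_above:
  assumes bs: "building_set \<G>" and nS: "nested \<G> S" and G: "G \<in> \<G>"
    and H: "H \<subseteq> S" "2 \<le> card H" "\<forall>x\<in>H. \<forall>y\<in>H. x \<noteq> y \<longrightarrow> \<not> x \<le> y"
    and meets: "\<forall>K\<in>H. \<exists>a. is_atom a \<and> a \<le> K \<and> a \<le> G"
  shows "\<not> G \<le> Sup (H::'a::{finite,complete_lattice} set)"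
proof
  assume "G \<le> Sup H"
  then have "Sup H = Sup (insert G H)"
    by (simp add: sup_absorb2)
  also have "\<dots> \<in> \<G>"
    using building_set_Sup_insert_mem[OF bs G _ meets] H(1) nested_subset[OF nS] by blast
  finally show False
    using nS H unfolding nested_def by blast
qed

lemma nested_floor_atoms_not_covered:
  assumes at: "atomic_lattice TYPE('a::{finite,complete_lattice})"
    and bs: "building_set \<G>" and nS: "nested \<G> S" and G: "(G::'a) \<in> \<G>"
    and W: "W \<subseteq> S" and not_above: "\<forall>w\<in>W. \<not> G \<le> w"
  shows "\<exists>a\<in>floor_atoms G. \<forall>w\<in>W. \<not> a \<le> w"
proof (rule ccontr)
  assume "\<not> ?thesis"
  then have cov: "\<exists>w\<in>W. a \<le> w" if "a \<in> floor_atoms G" for a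
    using that by blast
  define W' where "W' = {w\<in>W. \<exists>a\<in>floor_atoms G. a \<le> w}"
  define H where "H = {w\<in>W'. \<forall>w'\<in>W'. w \<le> w' \<longrightarrow> w = w'}"
  have H_W': "H \<subseteq> W'"
    by (auto simp: H_def)
  have cov_H: "\<exists>h\<in>H. a \<le> h" if a: "a \<in> floor_atoms G" for a
  proof -
    obtain w where "w \<in> W" "a \<le> w"
      using cov a by blast
    then have "w \<in> W'"
      using a by (auto simp: W'_def)
    then obtain h where "h \<in> H" "w \<le> h"
      using finite_has_maximal2[of W' w] by (auto simp: H_def)
    then show ?thesis
      using \<open>a \<le> w\<close> order_trans by blast
  qed
  have G_le: "G \<le> Sup H"
    using atomic_lattice_Sup_floor_atoms[OF at, of G] cov_H
    by (metis Sup_least Sup_upper2)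
  have "G \<noteq> bot"
    using G building_set_bot_notin[OF bs] by blast
  then obtain a where "a \<in> floor_atoms G"
    using floor_atoms_nonempty[OF at] by blast
  then have "H \<noteq> {}"
    using cov_H by blast
  show False
  proof (cases "2 \<le> card H")
    case True
    have "H \<subseteq> S" "\<forall>x\<in>H. \<forall>y\<in>H. x \<noteq> y \<longrightarrow> \<not> x \<le> y"
      "\<forall>K\<in>H. \<exists>a. is_atom a \<and> a \<le> K \<and> a \<le> G"
      using H_W' W by (auto simp: H_def W'_def floor_atoms_def)
    then show False
      using nested_antichain_Sup_not_above[OF bs nS G _ True] G_le by blast
  next
    case False
    with \<open>H \<noteq> {}\<close> obtain h where "H = {h}"
      by (metis One_nat_def card_1_singletonE card_gt_0_iff finite
          less_2_cases_iff linorder_le_less_linear not_less_zero)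
    then show False
      using G_le H_W' not_above by (auto simp: W'_def)
  qed
qed

text \<open>The generators of the cone representing the nested set \<open>S\<close> once the members of \<open>D\<close>
  have been blown up (the cone itself is spanned by their vectors \<open>v\<^sub>X\<close>).\<close>

definition partial_generators :: "'a::{finite,complete_lattice} set \<Rightarrow> 'a set \<Rightarrow> 'a set" where
  "partial_generators D S = (S \<inter> D) \<union> {a. is_atom a \<and> (\<exists>G\<in>S - D. a \<le> G)}"

lemma floor_atoms_not_subset_remaining_generators:
  assumes at: "atomic_lattice TYPE('a::{finite,complete_lattice})"
    and bs: "building_set \<G>" and nS: "nested \<G> S" and G: "(G::'a) \<in> \<G>" and GD: "G \<notin> D"
    and up: "\<forall>H\<in>\<G>. G \<le> H \<longrightarrow> H = G \<or> H \<in> D"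
  shows "\<not> floor_atoms G \<subseteq> (S \<inter> D) \<union> {a. is_atom a \<and> (\<exists>H\<in>S - insert G D. a \<le> H)}"
proof -
  define W where "W = (S - insert G D) \<union> {a\<in>S \<inter> D. is_atom a}"
  have "\<not> G \<le> w" if w: "w \<in> W" for w
  proof
    assume "G \<le> w"
    show False
    proof (cases "w \<in> D")
      case True
      then have "is_atom w"
        using w by (simp add: W_def)
      then have "G = w"
        using \<open>G \<le> w\<close> G building_set_bot_notin[OF bs] by (auto simp: is_atom_def)
      then show False
        using GD True by simp
    next
      case False
      then show False
        using w up \<open>G \<le> w\<close> nested_subset[OF nS] by (auto simp: W_def)
    qed
  qed
  then obtain a where "a \<in> floor_atoms G" "\<forall>w\<in>W. \<not> a \<le> w"
    using nested_floor_atoms_not_covered[OF at bs nS G, of W] by (auto simp: W_def)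
  then show ?thesis
    by (auto simp: W_def floor_atoms_def)
qed

lemma partial_generators_stellar:
  assumes at: "atomic_lattice TYPE('a::{finite,complete_lattice})"
    and bs: "building_set \<G>" and nS: "nested \<G> S" and G: "(G::'a) \<in> \<G>" and GD: "G \<notin> D"
    and up: "\<forall>H\<in>\<G>. G \<le> H \<longrightarrow> H = G \<or> H \<in> D"
    and F: "vvec ` partial_generators D S \<in> F"
  shows "vvec ` partial_generators (insert G D) S \<in> stellar F (vvec ` floor_atoms G)"
proof -
  define T where "T = (S \<inter> D) \<union> {a. is_atom a \<and> (\<exists>H\<in>S - insert G D. a \<le> H)}"
  have not_subset: "\<not> vvec ` floor_atoms G \<subseteq> vvec ` T"
    using floor_atoms_not_subset_remaining_generators[OF at bs nS G GD up] inj_vvec[OF at]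
    by (simp add: T_def inj_image_subset_iff)
  show ?thesis
  proof (cases "G \<in> S")
    case False
    then have "partial_generators (insert G D) S = T" "partial_generators D S = T"
      by (auto simp: partial_generators_def T_def)
    then show ?thesis
      using F not_subset unfolding stellar_def by simp
  next
    case True
    have "partial_generators (insert G D) S = insert G T"
      using True by (auto simp: partial_generators_def T_def)
    then have "vvec ` partial_generators (insert G D) S
        = insert (\<lambda>i. \<Sum>x\<in>vvec ` floor_atoms G. x i) (vvec ` T)"
      by (simp add: sum_vvec_floor_atoms[OF at])
    moreover have "T \<union> floor_atoms G = partial_generators D S"
      using True GD by (auto simp: partial_generators_def T_def floor_atoms_def)
    then have "vvec ` T \<union> vvec ` floor_atoms G \<in> F"
      using F by (metis image_Un)
    ultimately show ?thesis
      using not_subset unfolding stellar_def by blast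
  qed
qed

lemma blown_up_fan_Nil: "blown_up_fan [] = Pow (vvec ` {A. is_atom A})"
  by (simp add: blown_up_fan_def standard_fan_def)

lemma blown_up_fan_snoc:
  "blown_up_fan (Gs @ [G]) = stellar (blown_up_fan Gs) (vvec ` floor_atoms G)"
  by (simp add: blown_up_fan_def)

lemma blown_up_fan_subset_vvec_image:
  assumes at: "atomic_lattice TYPE('a::{finite,complete_lattice})" and bs: "building_set \<G>"
  shows "set Gs \<subseteq> \<G> \<Longrightarrow> R \<in> blown_up_fan (Gs::'a list) \<Longrightarrow> R \<subseteq> vvec ` \<G>"
proof (induction Gs arbitrary: R rule: rev_induct)
  case Nil
  then show ?case
    using building_set_atom_mem[OF bs] by (auto simp: blown_up_fan_Nil)
next
  case (snoc G Gs)
  from snoc.prems(2) consider "R \<in> blown_up_fan Gs"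
    | \<tau> where "R = insert (\<lambda>i. \<Sum>x\<in>vvec ` floor_atoms G. x i) \<tau>"
        "\<tau> \<union> vvec ` floor_atoms G \<in> blown_up_fan Gs"
    unfolding blown_up_fan_snoc stellar_def by blast
  then show ?case
  proof cases
    case 1
    then show ?thesis
      using snoc by simp
  next
    case 2
    then have "\<tau> \<subseteq> vvec ` \<G>"
      using snoc.IH snoc.prems(1) by auto
    then show ?thesis
      using 2(1) snoc.prems(1) by (simp add: sum_vvec_floor_atoms[OF at])
  qed
qed

lemma partial_generators_mem_blown_up_fan:
  assumes at: "atomic_lattice TYPE('a::{finite,complete_lattice})"
    and bs: "building_set \<G>" and nS: "nested \<G> S"
  shows "set (Ps @ Qs) = \<G> \<Longrightarrow> sorted_wrt (\<lambda>G H. \<not> G \<le> H) (Ps @ Qs)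
    \<Longrightarrow> vvec ` partial_generators (set Ps) S \<in> blown_up_fan (Ps::'a list)"
proof (induction Ps arbitrary: Qs rule: rev_induct)
  case Nil
  then show ?case
    by (auto simp: blown_up_fan_Nil partial_generators_def)
next
  case (snoc G Ps)
  have IH: "vvec ` partial_generators (set Ps) S \<in> blown_up_fan Ps"
    using snoc.IH[of "G # Qs"] snoc.prems by simp
  have sorted: "\<forall>P\<in>set Ps. \<not> P \<le> G" "\<forall>Q\<in>set Qs. \<not> G \<le> Q"
    using snoc.prems(2) by (simp_all add: sorted_wrt_append)
  have "G \<in> \<G>"
    using snoc.prems(1) by auto
  moreover have "G \<notin> set Ps"
    using sorted(1) by blast
  moreover have "\<forall>H\<in>\<G>. G \<le> H \<longrightarrow> H = G \<or> H \<in> set Ps"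
    using sorted(2) snoc.prems(1) by auto
  ultimately show ?case
    using partial_generators_stellar[OF at bs nS _ _ _ IH]
    by (simp add: blown_up_fan_snoc)
qed

lemma cone_span_pruned_fan_subset_nested_fan:
  assumes at: "atomic_lattice TYPE('a::{finite,complete_lattice})"
    and bs: "building_set \<G>" and Gs: "set Gs \<subseteq> (\<G>::'a set)"
  shows "cone_span ` pruned_fan \<G> Gs \<subseteq> nested_fan \<G>"
proof
  fix C assume "C \<in> cone_span ` pruned_fan \<G> Gs"
  then obtain R where R: "R \<in> blown_up_fan Gs" "nested \<G> {G \<in> \<G>. vvec G \<in> R}"
    and C: "C = cone_span R"
    by (auto simp: pruned_fan_def)
  have "R = vvec ` {G \<in> \<G>. vvec G \<in> R}"
    using blown_up_fan_subset_vvec_image[OF at bs Gs R(1)] by blast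
  then have "C = V_cone {G \<in> \<G>. vvec G \<in> R}"
    using C by (simp add: V_cone_def)
  then show "C \<in> nested_fan \<G>"
    using R(2) by (auto simp: nested_fan_def)
qed

lemma nested_fan_subset_cone_span_pruned_fan:
  assumes at: "atomic_lattice TYPE('a::{finite,complete_lattice})"
    and bs: "building_set \<G>" and Gs: "set Gs = (\<G>::'a set)"
    and sorted: "sorted_wrt (\<lambda>G H. \<not> G \<le> H) Gs"
  shows "nested_fan \<G> \<subseteq> cone_span ` pruned_fan \<G> Gs"
proof
  fix C assume "C \<in> nested_fan \<G>"
  then obtain S where S: "nested \<G> S" and C: "C = cone_span (vvec ` S)"
    by (auto simp: nested_fan_def V_cone_def)
  have "partial_generators (set Gs) S = S"
    using nested_subset[OF S] Gs by (auto simp: partial_generators_def)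
  then have "vvec ` S \<in> blown_up_fan Gs"
    using partial_generators_mem_blown_up_fan[OF at bs S, of Gs "[]"] Gs sorted by simp
  moreover have "{G \<in> \<G>. vvec G \<in> vvec ` S} = S"
    using nested_subset[OF S] inj_vvec[OF at] by (auto simp: inj_image_mem_iff)
  ultimately show "C \<in> cone_span ` pruned_fan \<G> Gs"
    using S C by (auto simp: pruned_fan_def)
qed

theorem corollary6p2:
  fixes \<G> :: "'a::{finite,complete_lattice} set" and Gs :: "'a list"
  assumes "atomic_lattice TYPE('a)"
    and "building_set \<G>"
    and "distinct Gs" and "set Gs = \<G>"
    and "\<forall>i<length Gs. \<forall>j<length Gs. Gs ! i \<le> Gs ! j \<longrightarrow> j \<le> i"
  shows "cone_span ` pruned_fan \<G> Gs = nested_fan \<G>"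
proof
  show "cone_span ` pruned_fan \<G> Gs \<subseteq> nested_fan \<G>"
    using cone_span_pruned_fan_subset_nested_fan[OF assms(1,2)] assms(4) by simp
  \<comment> \<open>The order hypothesis already forces \<open>Gs\<close> to be distinct.\<close>
  have "sorted_wrt (\<lambda>G H. \<not> G \<le> H) Gs"
    using assms(5) unfolding sorted_wrt_iff_nth_less by (meson less_trans not_le)
  then show "nested_fan \<G> \<subseteq> cone_span ` pruned_fan \<G> Gs"
    using nested_fan_subset_cone_span_pruned_fan[OF assms(1,2,4)] by blast
qed

end
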